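(* Let $C$ be a Reedy category and let $\Gamma$ be one of $\int N(C)$, $\int N^{-,+}(C)$, $\int N^{--,+}_+(C)$. Let $(\alpha,\theta)\colon([m],X)\to([n],Y)$ be a morphism in $\Gamma$. Consider the order-preserving map $\mathrm{pr}\colon\{(\beta,\varphi)\in\mathrm{Hom}_\Gamma(([m],X),([n],Y)):(\alpha,\theta)\le(\beta,\varphi)\}\to\{\beta\in\mathrm{Hom}_\Delta([m],[n]):\alpha\le\beta\}$, $(\beta,\varphi)\mapsto\beta$. Then the image of $\mathrm{pr}$ has a largest element $\alpha'$, and $\mathrm{pr}$ is an order isomorphism onto the interval $\{\beta\in\mathrm{Hom}_\Delta([m],[n]):\alpha\le\beta\le\alpha'\}$.
   Context: A Reedy category $(C,C_-,C_+)$: wide subcategories with unique factorization of every morphism as ($C_-$ then $C_+$), membership in $C_\pm$ decidable, and the relation ($x<'y$ iff non-identity $x\to y$ in $C_+$ or non-identity $y\to x$ in $C_-$) well-founded. $\Delta$: finite ordinals $[n]$ and order-preserving maps, hom-sets ordered pointwise. $\int N(C)$: objects $([n],X)$ with $X\colon[n]\to C$ a functor; morphisms $([m],X)\to([n],Y)$ are $(\alpha,\theta)$, $\alpha\colon[m]\to[n]$ in $\Delta$, $\theta\colon X\Rightarrow Y\circ\alpha$; composition $(\beta,\varphi)\circ(\alpha,\theta)=(\beta\alpha,(\varphi\alpha)\circ\theta)$. $\int N^{-,+}(C)$: subcategory of objects with $X$ sending all morphisms into $C_-$ and morphisms with all $\theta_i\in C_+$. $\int N^{--,+}_+(C)$: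 its subcategory of objects whose $X$ reflects identities and morphisms with $\alpha$ injective. Order on hom-sets: $(\alpha,\theta)\le(\alpha',\theta')$ iff $\alpha\le\alpha'$ pointwise and $\theta'_i=Y(\alpha(i)\le\alpha'(i))\circ\theta_i$ for all $i$. *)

theory Defs
  imports "HOL-Library.FuncSet"
begin

record ('o, 'a) category =
  cOb   :: "'o set"
  cAr   :: "'a set"
  cdom  :: "'a \<Rightarrow> 'o"
  ccod  :: "'a \<Rightarrow> 'o"
  cid   :: "'o \<Rightarrow> 'a"
  ccomp :: "'a \<Rightarrow> 'a \<Rightarrow> 'a"   (* ccomp C g f = g o f *)

definition chom :: "('o, 'a) category \<Rightarrow> 'o \<Rightarrow> 'o \<Rightarrow> 'a set" where
  "chom C x y = {f \<in> cAr C. cdom C f = x \<and> ccod C f = y}"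

definition is_category :: "('o, 'a) category \<Rightarrow> bool" where
  "is_category C \<longleftrightarrow>
     (\<forall>f\<in>cAr C. cdom C f \<in> cOb C \<and> ccod C f \<in> cOb C) \<and>
     (\<forall>x\<in>cOb C. cid C x \<in> chom C x x) \<and>
     (\<forall>f\<in>cAr C. \<forall>g\<in>cAr C. ccod C f = cdom C g \<longrightarrow>
         ccomp C g f \<in> chom C (cdom C f) (ccod C g)) \<and>
     (\<forall>f\<in>cAr C. ccomp C f (cid C (cdom C f)) = f \<and> ccomp C (cid C (ccod C f)) f = f) \<and>
     (\<forall>f\<in>cAr C. \<forall>g\<in>cAr C. \<forall>h\<in>cAr C. ccod C f = cdom C g \<longrightarrow> ccod C g = cdom C h \<longrightarrow>
         ccomp C h (ccomp C g f) = ccomp C (ccomp C h g) f)"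

definition wide_subcat :: "('o, 'a) category \<Rightarrow> 'a set \<Rightarrow> bool" where
  "wide_subcat C D \<longleftrightarrow> D \<subseteq> cAr C \<and> (\<forall>x\<in>cOb C. cid C x \<in> D) \<and>
     (\<forall>f\<in>D. \<forall>g\<in>D. ccod C f = cdom C g \<longrightarrow> ccomp C g f \<in> D)"

definition reedy_lt :: "('o, 'a) category \<Rightarrow> 'a set \<Rightarrow> 'a set \<Rightarrow> 'o \<Rightarrow> 'o \<Rightarrow> bool" where
  "reedy_lt C Cm Cp x y \<longleftrightarrow> x \<in> cOb C \<and> y \<in> cOb C \<and>
     ((\<exists>f \<in> Cp \<inter> chom C x y. f \<noteq> cid C x) \<or> (\<exists>f \<in> Cm \<inter> chom C y x. f \<noteq> cid C y))"

definition reedy :: "('o, 'a) category \<Rightarrow> 'a set \<Rightarrow> 'a set \<Rightarrow> bool" where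
  "reedy C Cm Cp \<longleftrightarrow> is_category C \<and> wide_subcat C Cm \<and> wide_subcat C Cp \<and>
     (\<forall>f\<in>cAr C. \<exists>!gh. fst gh \<in> Cm \<and> snd gh \<in> Cp \<and>
         cdom C (fst gh) = cdom C f \<and> ccod C (fst gh) = cdom C (snd gh) \<and>
         ccod C (snd gh) = ccod C f \<and> ccomp C (snd gh) (fst gh) = f) \<and>
     wf {(x, y). reedy_lt C Cm Cp x y}"

definition delta_hom :: "nat \<Rightarrow> nat \<Rightarrow> (nat \<Rightarrow> nat) set" where
  "delta_hom m n = {\<alpha> \<in> {0..m} \<rightarrow>\<^sub>E {0..n}. mono_on {0..m} \<alpha>}"

definition delta_le :: "nat \<Rightarrow> (nat \<Rightarrow> nat) \<Rightarrow> (nat \<Rightarrow> nat) \<Rightarrow> bool" where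
  "delta_le m \<alpha> \<beta> \<longleftrightarrow> (\<forall>i\<le>m. \<alpha> i \<le> \<beta> i)"

text \<open>A functor X : [n] -> C is given by its object map and the arrows X(i<=j).\<close>
type_synonym ('o, 'a) diagram = "(nat \<Rightarrow> 'o) \<times> (nat \<Rightarrow> nat \<Rightarrow> 'a)"

abbreviation dob :: "('o, 'a) diagram \<Rightarrow> nat \<Rightarrow> 'o" where "dob X \<equiv> fst X"
abbreviation dmor :: "('o, 'a) diagram \<Rightarrow> nat \<Rightarrow> nat \<Rightarrow> 'a" where "dmor X \<equiv> snd X"

definition nfunctor :: "('o, 'a) category \<Rightarrow> nat \<Rightarrow> ('o, 'a) diagram \<Rightarrow> bool" where
  "nfunctor C n X \<longleftrightarrow>
     dob X \<in> {0..n} \<rightarrow>\<^sub>E cOb C \<and>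
     (\<forall>i j. i \<le> j \<and> j \<le> n \<longrightarrow> dmor X i j \<in> chom C (dob X i) (dob X j)) \<and>
     (\<forall>i\<le>n. dmor X i i = cid C (dob X i)) \<and>
     (\<forall>i j k. i \<le> j \<and> j \<le> k \<and> k \<le> n \<longrightarrow> ccomp C (dmor X j k) (dmor X i j) = dmor X i k) \<and>
     (\<forall>i j. \<not> (i \<le> j \<and> j \<le> n) \<longrightarrow> dmor X i j = undefined)"

datatype gamma_kind = IntN | IntN_mp | IntN_mmp_p
  (* IntN = \<integral>N(C), IntN_mp = \<integral>N^{-,+}(C), IntN_mmp_p = \<integral>N^{--,+}_+(C) *)

definition gobj :: "gamma_kind \<Rightarrow> ('o, 'a) category \<Rightarrow> 'a set \<Rightarrow> 'a set \<Rightarrow> nat \<Rightarrow> ('o, 'a) diagram \<Rightarrow> bool" where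
  "gobj k C Cm Cp n X \<longleftrightarrow> nfunctor C n X \<and>
     (k \<noteq> IntN \<longrightarrow> (\<forall>i j. i \<le> j \<and> j \<le> n \<longrightarrow> dmor X i j \<in> Cm)) \<and>
     (k = IntN_mmp_p \<longrightarrow> (\<forall>i j. i \<le> j \<and> j \<le> n \<and> dmor X i j = cid C (dob X i) \<longrightarrow> i = j))"

definition ghom :: "gamma_kind \<Rightarrow> ('o, 'a) category \<Rightarrow> 'a set \<Rightarrow> 'a set \<Rightarrow>
    nat \<Rightarrow> ('o, 'a) diagram \<Rightarrow> nat \<Rightarrow> ('o, 'a) diagram \<Rightarrow> ((nat \<Rightarrow> nat) \<times> (nat \<Rightarrow> 'a)) set" where
  "ghom k C Cm Cp m X n Y = {(\<alpha>, \<theta>).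
     \<alpha> \<in> delta_hom m n \<and>
     \<theta> \<in> {0..m} \<rightarrow>\<^sub>E cAr C \<and>
     (\<forall>i\<le>m. \<theta> i \<in> chom C (dob X i) (dob Y (\<alpha> i))) \<and>
     (\<forall>i j. i \<le> j \<and> j \<le> m \<longrightarrow>
        ccomp C (dmor Y (\<alpha> i) (\<alpha> j)) (\<theta> i) = ccomp C (\<theta> j) (dmor X i j)) \<and>
     (k \<noteq> IntN \<longrightarrow> (\<forall>i\<le>m. \<theta> i \<in> Cp)) \<and>
     (k = IntN_mmp_p \<longrightarrow> inj_on \<alpha> {0..m})}"

definition gle :: "('o, 'a) category \<Rightarrow> nat \<Rightarrow> ('o, 'a) diagram \<Rightarrow>
    (nat \<Rightarrow> nat) \<times> (nat \<Rightarrow> 'a) \<Rightarrow> (nat \<Rightarrow> nat) \<times> (nat \<Rightarrow> 'a) \<Rightarrow> bool" where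
  "gle C m Y p q \<longleftrightarrow> delta_le m (fst p) (fst q) \<and>
     (\<forall>i\<le>m. snd q i = ccomp C (dmor Y (fst p i) (fst q i)) (snd p i))"

end

theory Submission
  imports Defs
begin

text \<open>
  If \<open>(\<alpha>, \<theta>) \<le> (\<beta>, \<phi>)\<close> then \<open>\<phi>\<^sub>i = Y(\<alpha>\<^sub>i \<le> \<beta>\<^sub>i) \<circ> \<theta>\<^sub>i\<close>, so \<open>\<phi>\<close> is determined by \<open>\<beta>\<close>, and by
  functoriality of \<open>Y\<close> the order between two such morphisms is the pointwise order of their
  \<open>\<beta>\<close>'s. Conversely this formula always yields a natural transformation \<open>X \<Rightarrow> Y \<beta>\<close>, so the
  only constraint on \<open>\<beta>\<close> is that every \<open>\<phi>\<^sub>i\<close> lies in \<open>C\<^sub>+\<close> (and, for the third \<open>\<Gamma>\<close>, that \<open>\<beta>\<close>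
  is injective). In a Reedy category \<open>h \<circ> u \<in> C\<^sub>+\<close> with \<open>h \<in> C\<^sub>-\<close> forces \<open>u \<in> C\<^sub>+\<close>, so for each
  \<open>i\<close> the admissible values of \<open>\<beta>\<^sub>i\<close> form an interval \<open>[\<alpha>\<^sub>i, c\<^sub>i]\<close>, and \<open>\<alpha>'\<^sub>i = min\<^sub>j\<^sub>\<ge>\<^sub>i c\<^sub>j\<close> is the
  largest monotone map below \<open>c\<close>. Injectivity comes for free from unique factorization.
\<close>

lemma nfunctor_dmor_in_chom:
  "nfunctor C n Y \<Longrightarrow> i \<le> j \<Longrightarrow> j \<le> n \<Longrightarrow> dmor Y i j \<in> chom C (dob Y i) (dob Y j)"
  by (simp add: nfunctor_def)

lemma nfunctor_dmor_id: "nfunctor C n Y \<Longrightarrow> i \<le> n \<Longrightarrow> dmor Y i i = cid C (dob Y i)"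
  by (simp add: nfunctor_def)

lemma nfunctor_dmor_comp:
  "nfunctor C n Y \<Longrightarrow> i \<le> j \<Longrightarrow> j \<le> l \<Longrightarrow> l \<le> n \<Longrightarrow>
    ccomp C (dmor Y j l) (dmor Y i j) = dmor Y i l"
  by (simp add: nfunctor_def)

lemma delta_hom_le: "\<beta> \<in> delta_hom m n \<Longrightarrow> i \<le> m \<Longrightarrow> \<beta> i \<le> n"
  by (auto simp: delta_hom_def)

lemma delta_hom_mono: "\<beta> \<in> delta_hom m n \<Longrightarrow> i \<le> j \<Longrightarrow> j \<le> m \<Longrightarrow> \<beta> i \<le> \<beta> j"
  by (auto simp: delta_hom_def intro: mono_onD)

locale small_category =
  fixes C :: "('o, 'a) category"
  assumes category: "is_category C"
begin

lemma chom_ob: "f \<in> chom C x y \<Longrightarrow> x \<in> cOb C \<and> y \<in> cOb C"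
  using category by (auto simp: is_category_def chom_def)

lemma id_in_chom: "x \<in> cOb C \<Longrightarrow> cid C x \<in> chom C x x"
  using category by (simp add: is_category_def)

lemma comp_in_chom: "f \<in> chom C x y \<Longrightarrow> g \<in> chom C y z \<Longrightarrow> ccomp C g f \<in> chom C x z"
  using category by (auto simp: is_category_def chom_def)

lemma comp_id_left: "f \<in> chom C x y \<Longrightarrow> ccomp C (cid C y) f = f"
  using category by (auto simp: is_category_def chom_def)

lemma comp_id_right: "f \<in> chom C x y \<Longrightarrow> ccomp C f (cid C x) = f"
  using category by (auto simp: is_category_def chom_def)

lemma comp_assoc:
  "f \<in> chom C w x \<Longrightarrow> g \<in> chom C x y \<Longrightarrow> h \<in> chom C y z \<Longrightarrow>
    ccomp C h (ccomp C g f) = ccomp C (ccomp C h g) f"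
proof -
  assume "f \<in> chom C w x" "g \<in> chom C x y" "h \<in> chom C y z"
  moreover have "\<forall>f\<in>cAr C. \<forall>g\<in>cAr C. \<forall>h\<in>cAr C. ccod C f = cdom C g \<longrightarrow> ccod C g = cdom C h \<longrightarrow>
      ccomp C h (ccomp C g f) = ccomp C (ccomp C h g) f"
    using category by (simp add: is_category_def)
  ultimately show ?thesis by (simp add: chom_def)
qed

lemma nfunctor_dmor_comp_apply:
  assumes Y: "nfunctor C n Y" and le: "a \<le> b" "b \<le> d" "d \<le> n" and f: "f \<in> chom C x (dob Y a)"
  shows "ccomp C (dmor Y b d) (ccomp C (dmor Y a b) f) = ccomp C (dmor Y a d) f"
proof -
  have "dmor Y a b \<in> chom C (dob Y a) (dob Y b)" "dmor Y b d \<in> chom C (dob Y b) (dob Y d)"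
    using le by (simp_all add: nfunctor_dmor_in_chom[OF Y])
  with f have "ccomp C (dmor Y b d) (ccomp C (dmor Y a b) f) = ccomp C (ccomp C (dmor Y b d) (dmor Y a b)) f"
    by (rule comp_assoc)
  also have "\<dots> = ccomp C (dmor Y a d) f" using le by (simp add: nfunctor_dmor_comp[OF Y])
  finally show ?thesis .
qed

end

locale reedy_category =
  fixes C :: "('o, 'a) category" and Cm Cp :: "'a set"
  assumes reedy: "reedy C Cm Cp"

sublocale reedy_category \<subseteq> small_category
  using reedy by unfold_locales (simp add: reedy_def)

context reedy_category
begin

lemma Cm_arr: "Cm \<subseteq> cAr C" and Cp_arr: "Cp \<subseteq> cAr C"
  using reedy by (simp_all add: reedy_def wide_subcat_def)

lemma Cm_id: "x \<in> cOb C \<Longrightarrow> cid C x \<in> Cm"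
  using reedy by (simp add: reedy_def wide_subcat_def)

lemma Cm_comp: "f \<in> Cm \<Longrightarrow> g \<in> Cm \<Longrightarrow> f \<in> chom C x y \<Longrightarrow> g \<in> chom C y z \<Longrightarrow> ccomp C g f \<in> Cm"
  using reedy by (simp add: reedy_def wide_subcat_def chom_def)

lemma unique_factorization:
  assumes "f \<in> cAr C"
  shows "\<exists>!gh. fst gh \<in> Cm \<and> snd gh \<in> Cp \<and> cdom C (fst gh) = cdom C f \<and>
      ccod C (fst gh) = cdom C (snd gh) \<and> ccod C (snd gh) = ccod C f \<and> ccomp C (snd gh) (fst gh) = f"
  using reedy assms unfolding reedy_def by blast

lemma factorization:
  assumes f: "f \<in> chom C x y"
  obtains z q p where "q \<in> Cm \<inter> chom C x z" "p \<in> Cp \<inter> chom C z y" "ccomp C p q = f"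
proof -
  from f have "f \<in> cAr C" by (simp add: chom_def)
  then obtain gh where "fst gh \<in> Cm" "snd gh \<in> Cp" "cdom C (fst gh) = cdom C f"
      "ccod C (fst gh) = cdom C (snd gh)" "ccod C (snd gh) = ccod C f" "ccomp C (snd gh) (fst gh) = f"
    using unique_factorization by blast
  with f Cm_arr Cp_arr show thesis
    by (intro that[of "fst gh" "cdom C (snd gh)" "snd gh"]) (auto simp: chom_def)
qed

lemma factorization_unique:
  assumes "q \<in> Cm \<inter> chom C x z" "p \<in> Cp \<inter> chom C z y"
    and "q' \<in> Cm \<inter> chom C x z'" "p' \<in> Cp \<inter> chom C z' y"
    and "ccomp C p q = ccomp C p' q'"
  shows "q = q'" and "p = p'"
proof -
  let ?f = "ccomp C p q"
  have f: "?f \<in> cAr C" "cdom C ?f = x" "ccod C ?f = y"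
    using assms comp_in_chom[of q x z p y] by (auto simp: chom_def)
  have "q \<in> Cm" "p \<in> Cp" "cdom C q = x" "ccod C q = cdom C p" "ccod C p = y"
    and "q' \<in> Cm" "p' \<in> Cp" "cdom C q' = x" "ccod C q' = cdom C p'" "ccod C p' = y"
    using assms(1-4) by (auto simp: chom_def)
  with unique_factorization[OF f(1)] f(2,3) assms(5) have "(q, p) = (q', p')"
    by (elim ex1E) (metis fst_conv snd_conv)
  then show "q = q'" and "p = p'" by simp_all
qed

text \<open>This is where well-foundedness of the Reedy order enters: a non-identity \<open>q\<close> and
  its retraction \<open>r\<close> would give \<open>y <' x\<close> and \<open>x <' y\<close>.\<close>
lemma Cm_retraction_eq_id:
  assumes q: "q \<in> Cm \<inter> chom C x y" and r: "r \<in> Cm \<inter> chom C y x" and rq: "ccomp C r q = cid C x"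
  shows "q = cid C x"
proof (rule ccontr)
  assume q_ne: "q \<noteq> cid C x"
  have ob: "x \<in> cOb C" "y \<in> cOb C" using q chom_ob by auto
  have "r \<noteq> cid C y"
  proof
    assume "r = cid C y"
    then have "ccomp C r q = q" using q comp_id_left by auto
    with rq q_ne show False by simp
  qed
  then have "reedy_lt C Cm Cp x y" and "reedy_lt C Cm Cp y x"
    using ob q r q_ne by (auto simp: reedy_lt_def)
  moreover have "wf {(x, y). reedy_lt C Cm Cp x y}" using reedy by (simp add: reedy_def)
  ultimately show False using wf_not_sym[of "{(x, y). reedy_lt C Cm Cp x y}" x y] by simp
qed

text \<open>Factor \<open>u = p q\<close> and \<open>h p = p' q'\<close>; then \<open>(h u) id\<close> and \<open>p' (q' q)\<close> are two Reedy
  factorizations of \<open>h u\<close>, so \<open>q\<close> has the retraction \<open>q'\<close> in \<open>C\<^sub>-\<close>.\<close>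
lemma Cp_cancel_Cm:
  assumes h: "h \<in> Cm \<inter> chom C y z" and u: "u \<in> chom C x y" and hu: "ccomp C h u \<in> Cp"
  shows "u \<in> Cp"
proof -
  obtain w q p where q: "q \<in> Cm \<inter> chom C x w" and p: "p \<in> Cp \<inter> chom C w y"
    and u_eq: "ccomp C p q = u"
    using factorization[OF u] by blast
  have "ccomp C h p \<in> chom C w z" using comp_in_chom p h by blast
  then obtain v q' p' where q': "q' \<in> Cm \<inter> chom C w v" and p': "p' \<in> Cp \<inter> chom C v z"
    and hp_eq: "ccomp C p' q' = ccomp C h p"
    using factorization by blast
  have x: "cid C x \<in> Cm \<inter> chom C x x" using Cm_id id_in_chom chom_ob u by blast
  have q'q: "ccomp C q' q \<in> Cm \<inter> chom C x v" using Cm_comp comp_in_chom q q' by blast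
  have hu': "ccomp C h u \<in> Cp \<inter> chom C x z" using hu comp_in_chom h u by blast
  have "ccomp C (ccomp C h u) (cid C x) = ccomp C h u"
    using comp_id_right hu' by blast
  also have "\<dots> = ccomp C (ccomp C h p) q" using u_eq comp_assoc q p h by blast
  also have "\<dots> = ccomp C p' (ccomp C q' q)"
    using hp_eq comp_assoc[of q x w q' v p' z] q q' p' by simp
  finally have "cid C x = ccomp C q' q"
    by (rule factorization_unique(1)[OF x hu' q'q p'])
  moreover from this have "v = x" using x q'q by (simp add: chom_def)
  ultimately have "q = cid C x"
    using q' by (intro Cm_retraction_eq_id[OF q, of q']) simp_all
  moreover from this have "w = x" using q x by (simp add: chom_def)
  ultimately show ?thesis using u_eq p comp_id_right by auto
qed

lemma Cm_eq_id_if_comp_Cp: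
  assumes f: "f \<in> Cm \<inter> chom C x y" and g: "g \<in> Cp \<inter> chom C y z" and gf: "ccomp C g f \<in> Cp"
  shows "f = cid C x"
proof -
  have x: "cid C x \<in> Cm \<inter> chom C x x" using Cm_id id_in_chom chom_ob f by blast
  have gf': "ccomp C g f \<in> Cp \<inter> chom C x z" using gf comp_in_chom f g by blast
  then have "ccomp C (ccomp C g f) (cid C x) = ccomp C g f" using comp_id_right by blast
  from factorization_unique(1)[OF x gf' f g this] show ?thesis by simp
qed

end

locale gamma_morphism = reedy_category +
  fixes k :: gamma_kind and m n :: nat and X Y :: "('o, 'a) diagram"
    and \<alpha> :: "nat \<Rightarrow> nat" and \<theta> :: "nat \<Rightarrow> 'a"
  assumes source: "gobj k C Cm Cp m X" and target: "gobj k C Cm Cp n Y"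
    and morphism: "(\<alpha>, \<theta>) \<in> ghom k C Cm Cp m X n Y"
begin

lemma X_nfunctor: "nfunctor C m X" and Y_nfunctor: "nfunctor C n Y"
  using source target by (simp_all add: gobj_def)

lemma X_dmor_Cm: "k \<noteq> IntN \<Longrightarrow> i \<le> j \<Longrightarrow> j \<le> m \<Longrightarrow> dmor X i j \<in> Cm"
  using source by (simp add: gobj_def)

lemma Y_dmor_Cm: "k \<noteq> IntN \<Longrightarrow> i \<le> j \<Longrightarrow> j \<le> n \<Longrightarrow> dmor Y i j \<in> Cm"
  using target by (simp add: gobj_def)

lemma X_reflects_id:
  "k = IntN_mmp_p \<Longrightarrow> i \<le> j \<Longrightarrow> j \<le> m \<Longrightarrow> dmor X i j = cid C (dob X i) \<Longrightarrow> i = j"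
  using source by (simp add: gobj_def)

lemma \<alpha>_delta_hom: "\<alpha> \<in> delta_hom m n"
  using morphism by (simp add: ghom_def)

lemma \<theta>_in_chom: "i \<le> m \<Longrightarrow> \<theta> i \<in> chom C (dob X i) (dob Y (\<alpha> i))"
  using morphism by (simp add: ghom_def)

lemma \<theta>_natural:
  "i \<le> j \<Longrightarrow> j \<le> m \<Longrightarrow> ccomp C (dmor Y (\<alpha> i) (\<alpha> j)) (\<theta> i) = ccomp C (\<theta> j) (dmor X i j)"
  using morphism by (simp add: ghom_def)

lemma \<theta>_Cp: "k \<noteq> IntN \<Longrightarrow> i \<le> m \<Longrightarrow> \<theta> i \<in> Cp"
  using morphism by (simp add: ghom_def)

text \<open>For \<open>(\<beta>, \<phi>) \<ge> (\<alpha>, \<theta>)\<close> the transformation \<open>\<phi>\<close> is forced to be \<open>transport \<beta>\<close>.\<close>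
definition transport :: "(nat \<Rightarrow> nat) \<Rightarrow> nat \<Rightarrow> 'a" where
  "transport \<beta> = (\<lambda>i\<in>{0..m}. ccomp C (dmor Y (\<alpha> i) (\<beta> i)) (\<theta> i))"

definition admissible :: "nat \<Rightarrow> nat \<Rightarrow> bool" where
  "admissible i b \<longleftrightarrow> \<alpha> i \<le> b \<and> b \<le> n \<and> (k \<noteq> IntN \<longrightarrow> ccomp C (dmor Y (\<alpha> i) b) (\<theta> i) \<in> Cp)"

lemma admissible_\<alpha>:
  assumes i: "i \<le> m" shows "admissible i (\<alpha> i)"
proof -
  have "\<alpha> i \<le> n" using delta_hom_le[OF \<alpha>_delta_hom i] .
  then have "ccomp C (dmor Y (\<alpha> i) (\<alpha> i)) (\<theta> i) = \<theta> i"
    using nfunctor_dmor_id[OF Y_nfunctor] comp_id_left[OF \<theta>_in_chom[OF i]] by simp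
  with \<open>\<alpha> i \<le> n\<close> show ?thesis using \<theta>_Cp[OF _ i] by (simp add: admissible_def)
qed

lemma admissible_downward_closed:
  assumes i: "i \<le> m" and b: "admissible i b" and b': "\<alpha> i \<le> b'" "b' \<le> b"
  shows "admissible i b'"
proof (cases "k = IntN")
  case True
  show ?thesis using b b' True unfolding admissible_def by simp
next
  case False
  have "b \<le> n" using b by (simp add: admissible_def)
  have "ccomp C (dmor Y b' b) (ccomp C (dmor Y (\<alpha> i) b') (\<theta> i)) \<in> Cp"
    using nfunctor_dmor_comp_apply[OF Y_nfunctor b' \<open>b \<le> n\<close> \<theta>_in_chom[OF i]] b False
    by (simp add: admissible_def)
  moreover have "dmor Y b' b \<in> Cm \<inter> chom C (dob Y b') (dob Y b)"
    using Y_dmor_Cm[OF False] nfunctor_dmor_in_chom[OF Y_nfunctor] b' \<open>b \<le> n\<close> by simp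
  moreover have "ccomp C (dmor Y (\<alpha> i) b') (\<theta> i) \<in> chom C (dob X i) (dob Y b')"
    using comp_in_chom \<theta>_in_chom[OF i] nfunctor_dmor_in_chom[OF Y_nfunctor] b' \<open>b \<le> n\<close> by simp
  ultimately have "ccomp C (dmor Y (\<alpha> i) b') (\<theta> i) \<in> Cp"
    using Cp_cancel_Cm by blast
  with b' \<open>b \<le> n\<close> show ?thesis by (simp add: admissible_def)
qed

definition bound :: "nat \<Rightarrow> nat" where
  "bound i = Max {b. admissible i b}"

lemma admissible_iff_le_bound:
  assumes i: "i \<le> m" and b: "\<alpha> i \<le> b"
  shows "admissible i b \<longleftrightarrow> b \<le> bound i"
proof -
  have fin: "finite {b. admissible i b}"
    by (rule finite_subset[of _ "{..n}"]) (auto simp: admissible_def)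
  have "admissible i (bound i)"
    unfolding bound_def using Max_in[OF fin] admissible_\<alpha>[OF i] by blast
  with fin show ?thesis
    using admissible_downward_closed[OF i _ b] by (auto simp: bound_def)
qed

lemma \<alpha>_le_bound: "i \<le> m \<Longrightarrow> \<alpha> i \<le> bound i"
  using admissible_iff_le_bound admissible_\<alpha> by blast

lemma bound_le: "i \<le> m \<Longrightarrow> bound i \<le> n"
  using admissible_iff_le_bound[OF _ \<alpha>_le_bound] by (simp add: admissible_def)

text \<open>The largest monotone map below \<open>bound\<close>; the \<open>\<alpha>'\<close> of the theorem.\<close>
definition \<alpha>' :: "nat \<Rightarrow> nat" where
  "\<alpha>' = (\<lambda>i\<in>{0..m}. Min (bound ` {i..m}))"

lemma \<alpha>'_le_bound: "i \<le> j \<Longrightarrow> j \<le> m \<Longrightarrow> \<alpha>' i \<le> bound j"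
  by (simp add: \<alpha>'_def)

lemma \<alpha>'_delta_hom: "\<alpha>' \<in> delta_hom m n"
proof -
  have "\<alpha>' i \<le> n" if "i \<le> m" for i
    using \<alpha>'_le_bound[of i i] bound_le that by fastforce
  moreover have "\<alpha>' i \<le> \<alpha>' j" if "i \<le> j" "j \<le> m" for i j
    using that by (simp add: \<alpha>'_def Min_antimono image_mono)
  ultimately show ?thesis
    by (auto simp: delta_hom_def \<alpha>'_def intro!: mono_onI)
qed

lemma le_\<alpha>'_iff_admissible:
  assumes \<beta>: "\<beta> \<in> delta_hom m n" and \<alpha>\<beta>: "delta_le m \<alpha> \<beta>"
  shows "delta_le m \<beta> \<alpha>' \<longleftrightarrow> (\<forall>i\<le>m. admissible i (\<beta> i))"
proof -
  have "delta_le m \<beta> \<alpha>' \<longleftrightarrow> (\<forall>i\<le>m. \<beta> i \<le> bound i)"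
  proof
    assume "delta_le m \<beta> \<alpha>'"
    then show "\<forall>i\<le>m. \<beta> i \<le> bound i"
      using \<alpha>'_le_bound[OF order.refl] by (auto simp: delta_le_def intro: order.trans)
  next
    assume \<beta>_bound: "\<forall>i\<le>m. \<beta> i \<le> bound i"
    have "\<beta> i \<le> \<alpha>' i" if "i \<le> m" for i
    proof -
      have "\<beta> i \<le> bound j" if "j \<in> {i..m}" for j
        using that delta_hom_mono[OF \<beta>, of i j] \<beta>_bound by force
      with \<open>i \<le> m\<close> show ?thesis by (simp add: \<alpha>'_def Min.boundedI)
    qed
    then show "delta_le m \<beta> \<alpha>'" by (simp add: delta_le_def)
  qed
  also have "\<dots> \<longleftrightarrow> (\<forall>i\<le>m. admissible i (\<beta> i))"
    using \<alpha>\<beta> admissible_iff_le_bound by (simp add: delta_le_def)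
  finally show ?thesis .
qed

lemma \<alpha>_le_\<alpha>': "delta_le m \<alpha> \<alpha>'"
  using le_\<alpha>'_iff_admissible[OF \<alpha>_delta_hom] admissible_\<alpha> by (simp add: delta_le_def)

lemma transport_in_chom:
  assumes \<beta>: "\<beta> \<in> delta_hom m n" and \<alpha>\<beta>: "delta_le m \<alpha> \<beta>" and i: "i \<le> m"
  shows "transport \<beta> i \<in> chom C (dob X i) (dob Y (\<beta> i))"
  using comp_in_chom[OF \<theta>_in_chom[OF i] nfunctor_dmor_in_chom[OF Y_nfunctor]] \<alpha>\<beta> delta_hom_le[OF \<beta> i] i
  by (simp add: transport_def delta_le_def)

lemma transport_trans:
  assumes "delta_le m \<alpha> \<beta>" "delta_le m \<beta> \<gamma>" "\<gamma> \<in> delta_hom m n" "i \<le> m"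
  shows "transport \<gamma> i = ccomp C (dmor Y (\<beta> i) (\<gamma> i)) (transport \<beta> i)"
  using assms nfunctor_dmor_comp_apply[OF Y_nfunctor _ _ _ \<theta>_in_chom, of i "\<beta> i" "\<gamma> i"] delta_hom_le
  by (simp add: transport_def delta_le_def)

lemma transport_natural:
  assumes \<beta>: "\<beta> \<in> delta_hom m n" and \<alpha>\<beta>: "delta_le m \<alpha> \<beta>" and ij: "i \<le> j" "j \<le> m"
  shows "ccomp C (dmor Y (\<beta> i) (\<beta> j)) (transport \<beta> i) = ccomp C (transport \<beta> j) (dmor X i j)"
proof -
  have i: "i \<le> m" using ij by simp
  have le: "\<alpha> i \<le> \<beta> i" "\<beta> i \<le> \<beta> j" "\<alpha> i \<le> \<alpha> j" "\<alpha> j \<le> \<beta> j" "\<beta> j \<le> n"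
    using \<alpha>\<beta> i ij delta_hom_mono[OF \<beta> ij] delta_hom_mono[OF \<alpha>_delta_hom ij] delta_hom_le[OF \<beta>]
    by (simp_all add: delta_le_def)
  note Y_apply = nfunctor_dmor_comp_apply[OF Y_nfunctor _ _ _ \<theta>_in_chom[OF i]]
  have "ccomp C (dmor Y (\<beta> i) (\<beta> j)) (transport \<beta> i) = ccomp C (dmor Y (\<alpha> i) (\<beta> j)) (\<theta> i)"
    using Y_apply le i by (simp add: transport_def)
  also have "\<dots> = ccomp C (dmor Y (\<alpha> j) (\<beta> j)) (ccomp C (dmor Y (\<alpha> i) (\<alpha> j)) (\<theta> i))"
    using Y_apply le by simp
  also have "\<dots> = ccomp C (dmor Y (\<alpha> j) (\<beta> j)) (ccomp C (\<theta> j) (dmor X i j))"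
    using \<theta>_natural[OF ij] by simp
  also have "\<dots> = ccomp C (transport \<beta> j) (dmor X i j)"
    using comp_assoc[OF nfunctor_dmor_in_chom[OF X_nfunctor ij] \<theta>_in_chom[OF ij(2)]
        nfunctor_dmor_in_chom[OF Y_nfunctor le(4,5)]] ij
    by (simp add: transport_def)
  finally show ?thesis .
qed

lemma transport_Cp: "k \<noteq> IntN \<Longrightarrow> i \<le> m \<Longrightarrow> admissible i (\<beta> i) \<Longrightarrow> transport \<beta> i \<in> Cp"
  by (simp add: transport_def admissible_def)

text \<open>If \<open>\<beta> i = \<beta> j\<close> for \<open>i < j\<close>, naturality factors \<open>transport \<beta> i\<close> through \<open>X(i \<le> j) \<in> C\<^sub>-\<close>;
  uniqueness of Reedy factorizations then makes \<open>X(i \<le> j)\<close> an identity, which \<open>X\<close> forbids.\<close>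
lemma admissible_strict_mono:
  assumes k: "k = IntN_mmp_p" and \<beta>: "\<beta> \<in> delta_hom m n" and \<alpha>\<beta>: "delta_le m \<alpha> \<beta>"
    and adm: "\<forall>i\<le>m. admissible i (\<beta> i)"
  shows "strict_mono_on {0..m} \<beta>"
proof (rule strict_mono_onI)
  fix i j assume "i \<in> {0..m}" "j \<in> {0..m}" "i < j"
  then have ij: "i \<le> j" "j \<le> m" and i: "i \<le> m" by simp_all
  have "\<beta> i \<noteq> \<beta> j"
  proof
    assume eq: "\<beta> i = \<beta> j"
    have "ccomp C (transport \<beta> j) (dmor X i j) = transport \<beta> i"
      using transport_natural[OF \<beta> \<alpha>\<beta> ij] eq nfunctor_dmor_id[OF Y_nfunctor delta_hom_le[OF \<beta> i]]
        comp_id_left[OF transport_in_chom[OF \<beta> \<alpha>\<beta> i]] by simp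
    moreover have "dmor X i j \<in> Cm \<inter> chom C (dob X i) (dob X j)"
      using X_dmor_Cm nfunctor_dmor_in_chom[OF X_nfunctor] ij k by simp
    moreover have "transport \<beta> j \<in> Cp \<inter> chom C (dob X j) (dob Y (\<beta> j))"
      using transport_Cp transport_in_chom[OF \<beta> \<alpha>\<beta>] adm ij k by simp
    ultimately have "dmor X i j = cid C (dob X i)"
      using Cm_eq_id_if_comp_Cp transport_Cp adm i k by simp
    with X_reflects_id[OF k ij] \<open>i < j\<close> show False by simp
  qed
  with delta_hom_mono[OF \<beta> ij] show "\<beta> i < \<beta> j" by simp
qed

lemma transport_in_ghom:
  assumes \<beta>: "\<beta> \<in> delta_hom m n" and \<alpha>\<beta>: "delta_le m \<alpha> \<beta>" and adm: "\<forall>i\<le>m. admissible i (\<beta> i)"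
  shows "(\<beta>, transport \<beta>) \<in> ghom k C Cm Cp m X n Y"
proof -
  have "transport \<beta> \<in> {0..m} \<rightarrow>\<^sub>E cAr C"
    using transport_in_chom[OF \<beta> \<alpha>\<beta>] by (simp add: PiE_iff chom_def transport_def)
  moreover have "k = IntN_mmp_p \<Longrightarrow> inj_on \<beta> {0..m}"
    using admissible_strict_mono[OF _ \<beta> \<alpha>\<beta> adm] strict_mono_on_imp_inj_on by blast
  ultimately show ?thesis
    using \<beta> transport_in_chom[OF \<beta> \<alpha>\<beta>] transport_natural[OF \<beta> \<alpha>\<beta>] transport_Cp adm
    by (simp add: ghom_def)
qed

lemma above_eq_graph:
  "{p \<in> ghom k C Cm Cp m X n Y. gle C m Y (\<alpha>, \<theta>) p}
     = (\<lambda>\<beta>. (\<beta>, transport \<beta>)) ` {\<beta> \<in> delta_hom m n. delta_le m \<alpha> \<beta> \<and> delta_le m \<beta> \<alpha>'}"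
proof (intro equalityI subsetI)
  fix p assume "p \<in> {p \<in> ghom k C Cm Cp m X n Y. gle C m Y (\<alpha>, \<theta>) p}"
  then obtain \<beta> \<phi> where p: "p = (\<beta>, \<phi>)" and hom: "(\<beta>, \<phi>) \<in> ghom k C Cm Cp m X n Y"
    and le: "gle C m Y (\<alpha>, \<theta>) (\<beta>, \<phi>)"
    by (cases p) simp
  have \<beta>: "\<beta> \<in> delta_hom m n" and \<alpha>\<beta>: "delta_le m \<alpha> \<beta>"
    using hom le by (simp_all add: ghom_def gle_def)
  have "\<phi> \<in> {0..m} \<rightarrow>\<^sub>E cAr C" using hom by (simp add: ghom_def)
  then have "\<phi> = restrict \<phi> {0..m}" by simp
  also have "\<dots> = transport \<beta>"
    unfolding transport_def using le by (intro restrict_ext) (simp add: gle_def)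
  finally have \<phi>: "\<phi> = transport \<beta>" .
  have "\<forall>i\<le>m. admissible i (\<beta> i)"
    using hom le delta_hom_le[OF \<beta>] by (auto simp: admissible_def ghom_def gle_def delta_le_def)
  then have "delta_le m \<beta> \<alpha>'" using le_\<alpha>'_iff_admissible[OF \<beta> \<alpha>\<beta>] by simp
  with p \<phi> \<beta> \<alpha>\<beta> show "p \<in> (\<lambda>\<beta>. (\<beta>, transport \<beta>)) ` {\<beta> \<in> delta_hom m n. delta_le m \<alpha> \<beta> \<and> delta_le m \<beta> \<alpha>'}"
    by blast
next
  fix p assume "p \<in> (\<lambda>\<beta>. (\<beta>, transport \<beta>)) ` {\<beta> \<in> delta_hom m n. delta_le m \<alpha> \<beta> \<and> delta_le m \<beta> \<alpha>'}"
  then obtain \<beta> where p: "p = (\<beta>, transport \<beta>)" and \<beta>: "\<beta> \<in> delta_hom m n"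
    and \<alpha>\<beta>: "delta_le m \<alpha> \<beta>" and \<beta>\<alpha>': "delta_le m \<beta> \<alpha>'"
    by blast
  have "(\<beta>, transport \<beta>) \<in> ghom k C Cm Cp m X n Y"
    using transport_in_ghom[OF \<beta> \<alpha>\<beta>] le_\<alpha>'_iff_admissible[OF \<beta> \<alpha>\<beta>] \<beta>\<alpha>' by simp
  moreover have "gle C m Y (\<alpha>, \<theta>) (\<beta>, transport \<beta>)"
    using \<alpha>\<beta> by (simp add: gle_def transport_def)
  ultimately show "p \<in> {p \<in> ghom k C Cm Cp m X n Y. gle C m Y (\<alpha>, \<theta>) p}" using p by simp
qed

lemma gle_transport_iff:
  assumes "delta_le m \<alpha> \<beta>" "\<gamma> \<in> delta_hom m n"
  shows "gle C m Y (\<beta>, transport \<beta>) (\<gamma>, transport \<gamma>) \<longleftrightarrow> delta_le m \<beta> \<gamma>"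
  using assms transport_trans by (auto simp: gle_def)

end

theorem proposition4p4:
  fixes C :: "('o, 'a) category" and Cm Cp :: "'a set" and k :: gamma_kind
    and m n :: nat and X Y :: "('o, 'a) diagram"
    and \<alpha> :: "nat \<Rightarrow> nat" and \<theta> :: "nat \<Rightarrow> 'a"
  assumes "reedy C Cm Cp"
    and "gobj k C Cm Cp m X" and "gobj k C Cm Cp n Y"
    and "(\<alpha>, \<theta>) \<in> ghom k C Cm Cp m X n Y"
  shows "\<exists>\<alpha>'.
     \<alpha>' \<in> fst ` {p \<in> ghom k C Cm Cp m X n Y. gle C m Y (\<alpha>, \<theta>) p} \<and>
     (\<forall>\<beta> \<in> fst ` {p \<in> ghom k C Cm Cp m X n Y. gle C m Y (\<alpha>, \<theta>) p}. delta_le m \<beta> \<alpha>') \<and>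
     fst ` {p \<in> ghom k C Cm Cp m X n Y. gle C m Y (\<alpha>, \<theta>) p}
        = {\<beta> \<in> delta_hom m n. delta_le m \<alpha> \<beta> \<and> delta_le m \<beta> \<alpha>'} \<and>
     inj_on fst {p \<in> ghom k C Cm Cp m X n Y. gle C m Y (\<alpha>, \<theta>) p} \<and>
     (\<forall>p \<in> {p \<in> ghom k C Cm Cp m X n Y. gle C m Y (\<alpha>, \<theta>) p}.
      \<forall>q \<in> {p \<in> ghom k C Cm Cp m X n Y. gle C m Y (\<alpha>, \<theta>) p}.
        gle C m Y p q \<longleftrightarrow> delta_le m (fst p) (fst q))"
proof -
  interpret gamma_morphism C Cm Cp k m n X Y \<alpha> \<theta>
    using assms by unfold_locales
  let ?I = "{\<beta> \<in> delta_hom m n. delta_le m \<alpha> \<beta> \<and> delta_le m \<beta> \<alpha>'}"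
  have "\<alpha>' \<in> ?I" using \<alpha>'_delta_hom \<alpha>_le_\<alpha>' by (simp add: delta_le_def)
  moreover have "fst ` (\<lambda>\<beta>. (\<beta>, transport \<beta>)) ` ?I = ?I" by (simp add: image_image)
  moreover have "inj_on fst ((\<lambda>\<beta>. (\<beta>, transport \<beta>)) ` ?I)" by (auto intro: inj_onI)
  moreover have "gle C m Y (\<beta>, transport \<beta>) (\<gamma>, transport \<gamma>) \<longleftrightarrow> delta_le m \<beta> \<gamma>"
    if "\<beta> \<in> ?I" "\<gamma> \<in> ?I" for \<beta> \<gamma>
    using that gle_transport_iff by simp
  ultimately show ?thesis unfolding above_eq_graph by (intro exI[of _ \<alpha>']) auto
qed

end
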